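(* Let $\mathrm{ALG}$ be any bandit algorithm and fix a round $t$. Suppose that the algorithm which runs $\mathrm{ALG}$ for $t-1$ rounds and then Thompson sampling at round $t$ is BIC at round $t$. Then the algorithm which runs $\mathrm{ALG}$ for $t$ rounds and then Thompson sampling at round $t+1$ is BIC at round $t+1$.
   Context: Incentivized exploration model: $K$ arms; mean rewards $\mu_1,\dots,\mu_K\in[0,1]$ drawn independently, $\mu_i\sim\mathcal P_i$ with known priors; Bernoulli rewards: given the means, each arm $i$ has an i.i.d. sequence of $\{0,1\}$ samples with mean $\mu_i$, the $n$-th choice of arm $i$ reveals its $n$-th sample. In each round $s$ the algorithm recommends $A_s$, the agent chooses $A'_s$, and the reward is observed by the algorithm. With $\mathcal E_{s-1}=\{A'_r=A_r\ \forall r<s\}$, an algorithm is BIC at round $s$ if for all arms $i,j$ with $\Pr[A_s=i]>0$, $\mathbb E[\mu_i-\mu_j\mid A_s=i,\mathcal E_{s-1}]\geq0$ (agents are assumed to have followed the recommendations in earlier rounds). $A^*=\min(\arg\max_j\mu_j)$; $\mathcal F_s$ is the $\sigma$-algebra of chosen arms and rewards before round $s$. Thompson sampling at round $s$ recommends $A_s$ with $\Pr[A_s=i\mid\mathcal F_s]=\Pr[A^*=i\mid\mathcal F_s]$. *)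

theory Defs
  imports "HOL-Probability.Probability"
begin

text \<open>Arms are 0,...,K-1. A history (of chosen arms and observed rewards, oldest first)
is a list of pairs (arm, reward) with reward True = 1, False = 0.
A (randomized) bandit algorithm maps the history so far to a distribution over arms.
Agents are assumed to follow the recommendations, so the recommended arm is the chosen arm.\<close>

type_synonym history = "(nat \<times> bool) list"
type_synonym algorithm = "history \<Rightarrow> nat pmf"

definition valid_alg :: "nat \<Rightarrow> algorithm \<Rightarrow> bool" where
  "valid_alg K ALG \<longleftrightarrow> (\<forall>h. set_pmf (ALG h) \<subseteq> {..<K})"

definition valid_priors :: "nat \<Rightarrow> (nat \<Rightarrow> real measure) \<Rightarrow> bool" where
  "valid_priors K P \<longleftrightarrow> (\<forall>i<K. prob_space (P i) \<and> sets (P i) = sets borel \<and> measure (P i) {0..1} = 1)"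

definition prior :: "nat \<Rightarrow> (nat \<Rightarrow> real measure) \<Rightarrow> (nat \<Rightarrow> real) measure" where
  "prior K P = PiM {..<K} P"

definition histories :: "nat \<Rightarrow> nat \<Rightarrow> history set" where
  "histories K n = {h. length h = n \<and> fst ` set h \<subseteq> {..<K}}"

definition alg_prob :: "algorithm \<Rightarrow> history \<Rightarrow> real" where
  "alg_prob ALG h = (\<Prod>r<length h. pmf (ALG (take r h)) (fst (h ! r)))"

text \<open>Likelihood of the rewards in h given the mean vector mu (Bernoulli rewards; the n-th pull
of an arm reveals the n-th i.i.d. sample of that arm).\<close>
definition lik :: "(nat \<Rightarrow> real) \<Rightarrow> history \<Rightarrow> real" where
  "lik mu h = (\<Prod>r<length h. if snd (h ! r) then mu (fst (h ! r)) else 1 - mu (fst (h ! r)))"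

definition best_arm :: "nat \<Rightarrow> (nat \<Rightarrow> real) \<Rightarrow> nat" where
  "best_arm K mu = (LEAST i. i < K \<and> (\<forall>j<K. mu j \<le> mu i))"

text \<open>Thompson sampling: probability of recommending arm i after history h,
equal to the posterior probability Pr[A* = i | history = h].\<close>
definition ts_prob :: "nat \<Rightarrow> (nat \<Rightarrow> real measure) \<Rightarrow> history \<Rightarrow> nat \<Rightarrow> real" where
  "ts_prob K P h i =
     (\<integral>mu. indicator {mu. best_arm K mu = i} mu * lik mu h \<partial>prior K P) /
     (\<integral>mu. lik mu h \<partial>prior K P)"

text \<open>For the algorithm that runs ALG for n rounds and then Thompson sampling at round n+1:
E[ f(mu) * 1{A_(n+1) = i} ].\<close>
definition ts_after_joint ::
  "nat \<Rightarrow> (nat \<Rightarrow> real measure) \<Rightarrow> algorithm \<Rightarrow> nat \<Rightarrow> ((nat \<Rightarrow> real) \<Rightarrow> real) \<Rightarrow> nat \<Rightarrow> real" where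
  "ts_after_joint K P ALG n f i =
     (\<Sum>h\<in>histories K n. \<integral>mu. f mu * alg_prob ALG h * lik mu h * ts_prob K P h i \<partial>prior K P)"

text \<open>BIC at round n+1 of the algorithm running ALG for n rounds then Thompson sampling:
for all arms i, j with Pr[A_(n+1) = i] > 0, E[mu_i - mu_j | A_(n+1) = i] >= 0.\<close>
definition bic_ts_after :: "nat \<Rightarrow> (nat \<Rightarrow> real measure) \<Rightarrow> algorithm \<Rightarrow> nat \<Rightarrow> bool" where
  "bic_ts_after K P ALG n \<longleftrightarrow>
     (\<forall>i<K. \<forall>j<K. ts_after_joint K P ALG n (\<lambda>_. 1) i > 0 \<longrightarrow>
        ts_after_joint K P ALG n (\<lambda>mu. mu i - mu j) i / ts_after_joint K P ALG n (\<lambda>_. 1) i \<ge> 0)"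

end

theory Submission
  imports Defs
begin

text \<open>Let \<open>H\<close> be the history after \<open>n\<close> rounds of \<open>ALG\<close>. Thompson sampling draws the next
  arm from the posterior law of \<open>A*\<close>, so it recommends \<open>i\<close> with probability \<open>Pr[A* = i]\<close>
  whatever \<open>n\<close> is: the denominator of the BIC condition does not depend on the round. The numerator is
  \<open>E[Pr[A* = i | H] * E[\<mu>\<^sub>i - \<mu>\<^sub>j | H]]\<close>. One more observation, of some arm \<open>a\<close>, splits
  each posterior into a success and a failure branch. Both \<open>1{A* = i}\<close> and \<open>\<mu>\<^sub>i - \<mu>\<^sub>j\<close>
  are monotone in \<open>\<mu>\<^sub>a\<close> in the same direction (increasing if \<open>a = i\<close>, decreasing if
  \<open>a = j\<close>, and the gap is constant otherwise), so by Chebyshev's integral inequality in the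
  coordinate \<open>\<mu>\<^sub>a\<close> their posterior means move the same way from the failure to the success
  branch. For such a split the product of the two posterior means is superadditive, so the
  numerator can only grow from round \<open>n + 1\<close> to round \<open>n + 2\<close>.\<close>

section \<open>Histories and the best arm\<close>

lemma sum_histories_Suc:
  "(\<Sum>h'\<in>histories K (Suc n). F h') =
   (\<Sum>h\<in>histories K n. \<Sum>a<K. F (h @ [(a, True)]) + F (h @ [(a, False)]))"
proof -
  let ?snoc = "\<lambda>(h, a, r). h @ [(a, r)]"
  have "histories K (Suc n) = ?snoc ` (histories K n \<times> {..<K} \<times> UNIV)"
  proof (intro set_eqI iffI)
    fix x assume x: "x \<in> histories K (Suc n)"
    then obtain h p where "x = h @ [p]" unfolding histories_def
      by (metis (mono_tags, lifting) length_Suc_conv_rev mem_Collect_eq)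
    with x show "x \<in> ?snoc ` (histories K n \<times> {..<K} \<times> UNIV)"
      unfolding histories_def by (cases p) (auto intro!: image_eqI[where x="(h, fst p, snd p)"])
  qed (force simp: histories_def)
  moreover have "inj_on ?snoc (histories K n \<times> {..<K} \<times> UNIV)"
    by (auto simp: inj_on_def)
  ultimately have "(\<Sum>h'\<in>histories K (Suc n). F h') =
      (\<Sum>x\<in>histories K n \<times> {..<K} \<times> UNIV. F (?snoc x))"
    by (simp add: sum.reindex)
  also have "\<dots> = (\<Sum>h\<in>histories K n. \<Sum>x\<in>{..<K} \<times> UNIV. F (h @ [(fst x, snd x)]))"
    by (simp add: sum.cartesian_product split_def)
  also have "\<dots> = (\<Sum>h\<in>histories K n. \<Sum>a<K. \<Sum>r\<in>UNIV. F (h @ [(a, r)]))"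
    by (simp add: sum.cartesian_product split_def)
  finally show ?thesis by (simp add: UNIV_bool add.commute)
qed

lemma histories_snoc: "h \<in> histories K n \<Longrightarrow> a < K \<Longrightarrow> h @ [(a, r)] \<in> histories K (Suc n)"
  unfolding histories_def by auto

lemma alg_prob_snoc: "alg_prob ALG (h @ [(a, r)]) = alg_prob ALG h * pmf (ALG h) a"
  unfolding alg_prob_def by (simp add: nth_append)

lemma alg_prob_nonneg: "0 \<le> alg_prob ALG h"
  unfolding alg_prob_def by (simp add: prod_nonneg)

lemma lik_snoc: "lik mu (h @ [(a, r)]) = lik mu h * (if r then mu a else 1 - mu a)"
proof -
  have "(\<Prod>q<length h. if snd ((h @ [(a, r)]) ! q) then mu (fst ((h @ [(a, r)]) ! q))
          else 1 - mu (fst ((h @ [(a, r)]) ! q))) = lik mu h"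
    unfolding lik_def by (rule prod.cong) (auto simp: nth_append)
  then show ?thesis unfolding lik_def by simp
qed

lemma sum_alg_prob_Suc_diff:
  assumes "valid_alg K ALG"
  shows "(\<Sum>h\<in>histories K (Suc n). alg_prob ALG h * \<Phi> h) - (\<Sum>h\<in>histories K n. alg_prob ALG h * \<Phi> h)
       = (\<Sum>h\<in>histories K n. \<Sum>a<K. alg_prob ALG h * pmf (ALG h) a *
            (\<Phi> (h @ [(a, True)]) + \<Phi> (h @ [(a, False)]) - \<Phi> h))"
proof -
  have pmf_sum: "(\<Sum>a<K. pmf (ALG h) a) = 1" for h
    using assms unfolding valid_alg_def by (intro sum_pmf_eq_1) auto
  have "(\<Sum>h\<in>histories K (Suc n). alg_prob ALG h * \<Phi> h) =
        (\<Sum>h\<in>histories K n. \<Sum>a<K. alg_prob ALG h * pmf (ALG h) a *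
           (\<Phi> (h @ [(a, True)]) + \<Phi> (h @ [(a, False)])))"
    unfolding sum_histories_Suc alg_prob_snoc by (simp add: distrib_left)
  moreover have "(\<Sum>h\<in>histories K n. alg_prob ALG h * \<Phi> h) =
        (\<Sum>h\<in>histories K n. \<Sum>a<K. alg_prob ALG h * pmf (ALG h) a * \<Phi> h)"
  proof (rule sum.cong[OF refl])
    fix h
    have "(\<Sum>a<K. alg_prob ALG h * pmf (ALG h) a * \<Phi> h) = alg_prob ALG h * \<Phi> h * (\<Sum>a<K. pmf (ALG h) a)"
      by (simp add: sum_distrib_left mult_ac)
    then show "alg_prob ALG h * \<Phi> h = (\<Sum>a<K. alg_prob ALG h * pmf (ALG h) a * \<Phi> h)"
      by (simp add: pmf_sum)
  qed
  ultimately show ?thesis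
    by (simp add: sum_subtractf[symmetric] right_diff_distrib)
qed

lemma best_arm_iff:
  assumes "i < K"
  shows "best_arm K mu = i \<longleftrightarrow> (\<forall>j<K. mu j \<le> mu i) \<and> (\<forall>j<i. mu j < mu i)"
proof
  let ?is_max = "\<lambda>i. i < K \<and> (\<forall>j<K. mu j \<le> mu i)"
  assume best: "best_arm K mu = i"
  have "Max (mu ` {..<K}) \<in> mu ` {..<K}"
    using assms by (intro Max_in) auto
  then obtain m where "m < K" "mu m = Max (mu ` {..<K})"
    by auto
  then have "?is_max m" by simp
  then have max_i: "?is_max i"
    using LeastI[of ?is_max m] best unfolding best_arm_def by auto
  moreover have "mu j < mu i" if "j < i" for j
  proof -
    have "\<not> ?is_max j"
      using not_less_Least[of j ?is_max] best that unfolding best_arm_def by auto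
    then show ?thesis using max_i that by force
  qed
  ultimately show "(\<forall>j<K. mu j \<le> mu i) \<and> (\<forall>j<i. mu j < mu i)"
    by blast
next
  assume max: "(\<forall>j<K. mu j \<le> mu i) \<and> (\<forall>j<i. mu j < mu i)"
  show "best_arm K mu = i"
    unfolding best_arm_def
  proof (rule Least_equality)
    show "i < K \<and> (\<forall>j<K. mu j \<le> mu i)" using max assms by auto
  next
    fix y assume "y < K \<and> (\<forall>j<K. mu j \<le> mu y)"
    then show "i \<le> y" using max assms by (meson leD not_le_imp_less)
  qed
qed

lemma best_arm_update_increase:
  assumes i: "i < K" and best: "best_arm K (mu(i := x)) = i" and "x \<le> x'"
  shows "best_arm K (mu(i := x')) = i"
proof -
  have "\<forall>j<K. j \<noteq> i \<longrightarrow> mu j \<le> x" "\<forall>j<i. mu j < x"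
    using best unfolding best_arm_iff[OF i] by (metis fun_upd_apply less_irrefl)+
  then show ?thesis
    unfolding best_arm_iff[OF i] using \<open>x \<le> x'\<close> by auto
qed

lemma best_arm_update_decrease:
  assumes i: "i < K" and "j \<noteq> i" and best: "best_arm K (mu(j := x')) = i" and "x \<le> x'"
  shows "best_arm K (mu(j := x)) = i"
proof -
  have "\<forall>k<K. (mu(j := x')) k \<le> mu i" "\<forall>k<i. (mu(j := x')) k < mu i"
    using best \<open>j \<noteq> i\<close> unfolding best_arm_iff[OF i] by auto
  then show ?thesis
    unfolding best_arm_iff[OF i] using \<open>j \<noteq> i\<close> \<open>x \<le> x'\<close>
    by (auto simp: fun_upd_apply)
qed

section \<open>The prior and the likelihood\<close>

lemma prob_space_prior: "valid_priors K P \<Longrightarrow> prob_space (prior K P)"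
  unfolding prior_def valid_priors_def by (intro prob_space_PiM) auto

lemma measurable_prior_component:
  assumes "valid_priors K P" "k < K"
  shows "(\<lambda>mu. mu k) \<in> borel_measurable (prior K P)"
proof -
  have "(\<lambda>mu. mu k) \<in> measurable (prior K P) (P k)"
    unfolding prior_def using assms(2) by (intro measurable_component_singleton) auto
  then show ?thesis
    using assms measurable_cong_sets[OF refl] unfolding valid_priors_def by metis
qed

lemma AE_PiM_unit_interval:
  assumes "valid_priors K P" "I \<subseteq> {..<K}"
  shows "AE y in PiM I P. \<forall>k\<in>I. y k \<in> {0..1}"
proof -
  have "AE y in PiM I P. y k \<in> {0..1}" if "k \<in> I" for k
  proof (rule AE_PiM_component[OF _ that])
    show "prob_space (P k)" if "k \<in> I" for k
      using assms that unfolding valid_priors_def by auto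
    interpret prob_space "P k" using assms that unfolding valid_priors_def by auto
    show "AE x in P k. x \<in> {0..1}"
      using assms that unfolding valid_priors_def by (intro AE_prob_1) auto
  qed
  moreover have "finite I" using assms(2) finite_subset by blast
  ultimately show ?thesis by (simp add: eventually_ball_finite)
qed

lemma AE_prior_unit_cube:
  "valid_priors K P \<Longrightarrow> AE mu in prior K P. \<forall>k<K. mu k \<in> {0..1}"
  using AE_PiM_unit_interval[of K P "{..<K}"] unfolding prior_def
  by (auto elim: eventually_mono)

lemma measurable_lik:
  assumes "valid_priors K P" "h \<in> histories K n"
  shows "(\<lambda>mu. lik mu h) \<in> borel_measurable (prior K P)"
proof -
  have "fst (h ! r) < K" if "r < length h" for r
    using assms(2) that unfolding histories_def by (force dest: nth_mem)
  then show ?thesis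
    unfolding lik_def using measurable_prior_component[OF assms(1)]
    by (intro borel_measurable_prod) auto
qed

lemma lik_bounds:
  assumes "\<forall>k<K. mu k \<in> {0..1}" "h \<in> histories K n"
  shows "0 \<le> lik mu h" "lik mu h \<le> 1"
proof -
  have "fst (h ! r) < K" if "r < length h" for r
    using assms(2) that unfolding histories_def by (force dest: nth_mem)
  then have "mu (fst (h ! r)) \<in> {0..1}" if "r < length h" for r
    using assms(1) that by blast
  then show "0 \<le> lik mu h" "lik mu h \<le> 1"
    unfolding lik_def by (auto intro!: prod_nonneg prod_le_1)
qed

lemma measurable_best_arm_indicator:
  assumes vp: "valid_priors K P" and i: "i < K"
  shows "(\<lambda>mu. indicator {mu. best_arm K mu = i} mu :: real) \<in> borel_measurable (prior K P)"
proof -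
  let ?M = "prior K P"
  have "{mu \<in> space ?M. mu j \<le> mu i \<and> (j < i \<longrightarrow> mu j < mu i)} \<in> sets ?M" if "j < K" for j
    using measurable_prior_component[OF vp i] measurable_prior_component[OF vp that]
    by (intro sets.sets_Collect_conj sets.sets_Collect_imp sets.sets_Collect_const
        borel_measurable_le borel_measurable_less)
  then have "(\<Inter>j<K. {mu \<in> space ?M. mu j \<le> mu i \<and> (j < i \<longrightarrow> mu j < mu i)}) \<in> sets ?M"
    using i by (intro sets.finite_INT) auto
  moreover have "{mu. best_arm K mu = i} \<inter> space ?M =
      (\<Inter>j<K. {mu \<in> space ?M. mu j \<le> mu i \<and> (j < i \<longrightarrow> mu j < mu i)})"
    using i unfolding best_arm_iff[OF i] by auto
  ultimately show ?thesis
    by (simp add: borel_measurable_indicator_iff)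
qed

lemma integrable_times_lik:
  assumes vp: "valid_priors K P" and "h \<in> histories K n"
    and "F \<in> borel_measurable (prior K P)"
    and "\<And>mu. \<forall>k<K. mu k \<in> {0..1} \<Longrightarrow> \<bar>F mu\<bar> \<le> B"
  shows "integrable (prior K P) (\<lambda>mu. F mu * lik mu h)"
proof -
  interpret prob_space "prior K P" by (rule prob_space_prior[OF vp])
  show ?thesis
  proof (rule integrable_const_bound[where B = B])
    show "AE mu in prior K P. norm (F mu * lik mu h) \<le> B"
      using AE_prior_unit_cube[OF vp]
    proof eventually_elim
      case (elim mu)
      then show ?case
        using assms(4)[OF elim] lik_bounds[OF elim assms(2)]
        by (simp add: abs_mult) (meson abs_ge_zero mult_right_le_one_le order_trans)
    qed
  qed (intro borel_measurable_times assms(3) measurable_lik[OF vp assms(2)])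
qed

text \<open>\<open>alg_prob ALG h * post_int K P f h\<close> is \<open>E[f(\<mu>); H = h]\<close> for the history \<open>H\<close> of \<open>ALG\<close>;
  so \<open>post_int K P f h\<close> is the posterior expectation of \<open>f\<close> given \<open>h\<close>, not normalised.\<close>
definition post_int :: "nat \<Rightarrow> (nat \<Rightarrow> real measure) \<Rightarrow> ((nat \<Rightarrow> real) \<Rightarrow> real) \<Rightarrow> history \<Rightarrow> real"
  where "post_int K P f h = (\<integral>mu. f mu * lik mu h \<partial>prior K P)"

lemma ts_after_joint_eq_sum:
  "ts_after_joint K P ALG n f i =
     (\<Sum>h\<in>histories K n. alg_prob ALG h * (ts_prob K P h i * post_int K P f h))"
  unfolding ts_after_joint_def post_int_def
proof (intro sum.cong refl)
  fix h
  have "(\<lambda>mu. f mu * alg_prob ALG h * lik mu h * ts_prob K P h i) =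
        (\<lambda>mu. alg_prob ALG h * (ts_prob K P h i * (f mu * lik mu h)))"
    by (simp add: mult_ac)
  then show "(\<integral>mu. f mu * alg_prob ALG h * lik mu h * ts_prob K P h i \<partial>prior K P) =
      alg_prob ALG h * (ts_prob K P h i * (\<integral>mu. f mu * lik mu h \<partial>prior K P))"
    by simp
qed

lemma post_int_mono:
  assumes vp: "valid_priors K P" and h: "h \<in> histories K n"
    and Fm: "F \<in> borel_measurable (prior K P)" and Gm: "G \<in> borel_measurable (prior K P)"
    and Fb: "\<And>mu. \<forall>k<K. mu k \<in> {0..1} \<Longrightarrow> \<bar>F mu\<bar> \<le> 1"
    and Gb: "\<And>mu. \<forall>k<K. mu k \<in> {0..1} \<Longrightarrow> \<bar>G mu\<bar> \<le> 1"
    and le: "\<And>mu. \<forall>k<K. mu k \<in> {0..1} \<Longrightarrow> F mu \<le> G mu"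
  shows "post_int K P F h \<le> post_int K P G h"
  unfolding post_int_def
proof (rule integral_mono_AE)
  show "integrable (prior K P) (\<lambda>mu. F mu * lik mu h)"
    by (rule integrable_times_lik[OF vp h Fm Fb])
  show "integrable (prior K P) (\<lambda>mu. G mu * lik mu h)"
    by (rule integrable_times_lik[OF vp h Gm Gb])
  show "AE mu in prior K P. F mu * lik mu h \<le> G mu * lik mu h"
    using AE_prior_unit_cube[OF vp]
  proof eventually_elim
    case (elim mu)
    show ?case using le[OF elim] lik_bounds(1)[OF elim h] by (rule mult_right_mono)
  qed
qed

lemma post_int_abs_le:
  assumes vp: "valid_priors K P" and h: "h \<in> histories K n"
    and "F \<in> borel_measurable (prior K P)"
    and "\<And>mu. \<forall>k<K. mu k \<in> {0..1} \<Longrightarrow> \<bar>F mu\<bar> \<le> 1"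
  shows "\<bar>post_int K P F h\<bar> \<le> post_int K P (\<lambda>_. 1) h"
proof -
  have "post_int K P F h \<le> post_int K P (\<lambda>_. 1) h"
    using assms by (intro post_int_mono[OF vp h]) (auto simp: abs_le_iff)
  moreover have "post_int K P (\<lambda>_. - 1) h \<le> post_int K P F h"
    using assms by (intro post_int_mono[OF vp h]) (auto simp: abs_le_iff)
  ultimately show ?thesis unfolding post_int_def by simp
qed

lemma post_int_snoc:
  assumes vp: "valid_priors K P" and h: "h \<in> histories K n" and a: "a < K"
    and "F \<in> borel_measurable (prior K P)"
    and "\<And>mu. \<forall>k<K. mu k \<in> {0..1} \<Longrightarrow> \<bar>F mu\<bar> \<le> 1"
  shows "post_int K P F (h @ [(a, True)]) + post_int K P F (h @ [(a, False)]) = post_int K P F h"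
proof -
  have "integrable (prior K P) (\<lambda>mu. F mu * lik mu (h @ [(a, r)]))" for r
    using histories_snoc[OF h a] assms(4,5) by (rule integrable_times_lik[OF vp])
  then have "post_int K P F (h @ [(a, True)]) + post_int K P F (h @ [(a, False)]) =
      (\<integral>mu. F mu * lik mu (h @ [(a, True)]) + F mu * lik mu (h @ [(a, False)]) \<partial>prior K P)"
    unfolding post_int_def by simp
  also have "\<dots> = post_int K P F h"
    unfolding post_int_def lik_snoc by (simp add: algebra_simps)
  finally show ?thesis .
qed

lemma post_int_nonneg:
  assumes "valid_priors K P" "h \<in> histories K n"
    and "\<And>mu. \<forall>k<K. mu k \<in> {0..1} \<Longrightarrow> 0 \<le> F mu"
  shows "0 \<le> post_int K P F h"
  unfolding post_int_def using AE_prior_unit_cube[OF assms(1)]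
  by (intro integral_nonneg_AE) (use assms(3) lik_bounds(1)[OF _ assms(2)] in \<open>auto elim!: eventually_mono\<close>)

lemma ts_prob_eq_post_int:
  "ts_prob K P h i = post_int K P (\<lambda>mu. indicator {mu. best_arm K mu = i} mu) h / post_int K P (\<lambda>_. 1) h"
  unfolding ts_prob_def post_int_def by simp

lemma ts_prob_times_post_int_one:
  assumes vp: "valid_priors K P" and h: "h \<in> histories K n" and i: "i < K"
  shows "ts_prob K P h i * post_int K P (\<lambda>_. 1) h =
         post_int K P (\<lambda>mu. indicator {mu. best_arm K mu = i} mu) h"
proof -
  have "\<bar>post_int K P (\<lambda>mu. indicator {mu. best_arm K mu = i} mu) h\<bar> \<le> post_int K P (\<lambda>_. 1) h"
    using measurable_best_arm_indicator[OF vp i]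
    by (intro post_int_abs_le[OF vp h]) (auto simp: indicator_def)
  then show ?thesis
    unfolding ts_prob_eq_post_int by (cases "post_int K P (\<lambda>_. 1) h = 0") auto
qed

section \<open>Splitting off one coordinate of the prior\<close>

lemma integrable_bounded_on_unit_interval:
  fixes f :: "real \<Rightarrow> real"
  assumes "finite_measure Q" "AE x in Q. x \<in> {0..1}" "f \<in> borel_measurable Q"
    and "\<And>x. x \<in> {0..1} \<Longrightarrow> \<bar>f x\<bar> \<le> C"
  shows "integrable Q f"
proof -
  interpret finite_measure Q by fact
  show ?thesis
    by (rule integrable_const_bound[where B = C]) (use assms(2-4) in \<open>auto elim: eventually_mono\<close>)
qed

text \<open>Chebyshev's integral inequality for the increasing pair \<open>psi\<close>, \<open>id\<close> and the weight \<open>g\<close>: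
  with \<open>m\<close> the \<open>g\<close>-weighted mean of \<open>x\<close>, \<open>(x - m) * (psi x - psi m) \<ge> 0\<close> pointwise.\<close>
lemma chebyshev_tilt_inequality:
  fixes Q :: "real measure" and g psi :: "real \<Rightarrow> real"
  assumes Q: "finite_measure Q" "sets Q = sets borel" and ae: "AE x in Q. x \<in> {0..1}"
    and gm: "g \<in> borel_measurable Q" and g: "\<And>x. x \<in> {0..1} \<Longrightarrow> 0 \<le> g x \<and> g x \<le> 1"
    and pm: "psi \<in> borel_measurable Q" and pb: "\<And>x. x \<in> {0..1} \<Longrightarrow> \<bar>psi x\<bar> \<le> B"
    and mono: "\<And>x x'. 0 \<le> x \<Longrightarrow> x \<le> x' \<Longrightarrow> x' \<le> 1 \<Longrightarrow> psi x \<le> psi x'"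
  shows "(\<integral>x. psi x * g x * (1 - x) \<partial>Q) * (\<integral>x. g x * x \<partial>Q)
           \<le> (\<integral>x. psi x * g x * x \<partial>Q) * (\<integral>x. g x * (1 - x) \<partial>Q)"
proof -
  have xm: "(\<lambda>x. x) \<in> borel_measurable Q"
    using Q(2) by (rule measurable_ident_sets)
  have bounds: "\<bar>g x\<bar> \<le> 1" "\<bar>g x * x\<bar> \<le> 1" "\<bar>psi x * g x\<bar> \<le> B" "\<bar>psi x * g x * x\<bar> \<le> B"
    if "x \<in> {0..1}" for x
  proof -
    have "0 \<le> x" "0 \<le> g x" "g x \<le> 1" "0 \<le> g x * x" "g x * x \<le> 1"
      using g[OF that] that by (auto intro: mult_le_one)
    then show "\<bar>g x\<bar> \<le> 1" "\<bar>g x * x\<bar> \<le> 1" "\<bar>psi x * g x\<bar> \<le> B" "\<bar>psi x * g x * x\<bar> \<le> B"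
      using pb[OF that] unfolding mult.assoc[of "psi x"]
      by (simp_all add: abs_mult) (meson abs_ge_zero mult_nonneg_nonneg mult_right_le_one_le order_trans)+
  qed
  note integrable = integrable_bounded_on_unit_interval[OF Q(1) ae]
  have ig: "integrable Q g"
    by (rule integrable[OF gm, where C = 1]) (use bounds in auto)
  have igx: "integrable Q (\<lambda>x. g x * x)"
    by (rule integrable[where C = 1]) (use bounds gm xm in \<open>auto intro: borel_measurable_times\<close>)
  have ipg: "integrable Q (\<lambda>x. psi x * g x)"
    by (rule integrable[where C = B]) (use bounds gm pm in \<open>auto intro: borel_measurable_times\<close>)
  have ipgx: "integrable Q (\<lambda>x. psi x * g x * x)"
    by (rule integrable[where C = B]) (use bounds gm pm xm in \<open>auto intro!: borel_measurable_times\<close>)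
  define M where "M = (\<integral>x. g x \<partial>Q)"
  define S where "S = (\<integral>x. g x * x \<partial>Q)"
  define A where "A = (\<integral>x. psi x * g x * x \<partial>Q)"
  define C where "C = (\<integral>x. psi x * g x \<partial>Q)"
  have "0 \<le> S" unfolding S_def
    by (rule integral_nonneg_AE) (use ae g in \<open>auto elim: eventually_mono\<close>)
  moreover have "S \<le> M" unfolding S_def M_def
    by (rule integral_mono_AE[OF igx ig])
      (use ae in \<open>eventually_elim, use g in \<open>auto intro: mult_right_le_one_le\<close>\<close>)
  ultimately have "C * S \<le> A * M"
  proof (cases "M = 0")
    case False
    with \<open>0 \<le> S\<close> \<open>S \<le> M\<close> have "0 < M" by auto
    define m where "m = S / M"
    have m: "0 \<le> m" "m \<le> 1" unfolding m_def using \<open>0 < M\<close> \<open>0 \<le> S\<close> \<open>S \<le> M\<close> by auto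
    have "0 \<le> (\<integral>x. g x * ((x - m) * (psi x - psi m)) \<partial>Q)"
    proof (rule integral_nonneg_AE)
      show "AE x in Q. 0 \<le> g x * ((x - m) * (psi x - psi m))"
        using ae
      proof eventually_elim
        case (elim x)
        then have "0 \<le> (x - m) * (psi x - psi m)"
          using mono[of x m] mono[of m x] m by (cases "x \<le> m") (auto intro: mult_nonpos_nonpos)
        then show ?case using g[OF elim] by simp
      qed
    qed
    also have "(\<integral>x. g x * ((x - m) * (psi x - psi m)) \<partial>Q) =
        (\<integral>x. psi x * g x * x - m * (psi x * g x) - (psi m * (g x * x) - m * psi m * g x) \<partial>Q)"
      by (rule Bochner_Integration.integral_cong) (auto simp: algebra_simps)
    also have "\<dots> = A - m * C - (psi m * S - m * psi m * M)"
      unfolding A_def C_def S_def M_def using ig igx ipg ipgx by simp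
    also have "\<dots> = (A * M - C * S) / M"
      unfolding m_def using \<open>0 < M\<close> by (simp add: field_simps)
    finally show ?thesis using \<open>0 < M\<close> by (simp add: zero_le_divide_iff)
  qed (use \<open>0 \<le> S\<close> \<open>S \<le> M\<close> in simp)
  then have "(C - A) * S \<le> A * (M - S)"
    by (simp add: algebra_simps)
  moreover have "(\<integral>x. g x * (1 - x) \<partial>Q) = M - S"
    unfolding M_def S_def using ig igx by (simp add: right_diff_distrib)
  moreover have "(\<integral>x. psi x * g x * (1 - x) \<partial>Q) = C - A"
    unfolding C_def A_def using ipg ipgx by (simp add: right_diff_distrib)
  ultimately show ?thesis
    unfolding S_def A_def by simp
qed

text \<open>\<open>product_integral_insert\<close> needs every factor to be \<sigma>-finite, so \<open>P\<close> is padded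
  outside \<open>{..<K}\<close>.\<close>
lemma integral_prior_split:
  fixes f :: "(nat \<Rightarrow> real) \<Rightarrow> real"
  assumes vp: "valid_priors K P" and a: "a < K" and f: "integrable (prior K P) f"
  shows "(\<integral>mu. f mu \<partial>prior K P) = (\<integral>y. (\<integral>x. f (y(a := x)) \<partial>P a) \<partial>PiM ({..<K} - {a}) P)"
proof -
  define P' where "P' k = (if k < K then P k else return borel (0::real))" for k
  interpret product_sigma_finite P'
    unfolding product_sigma_finite_def P'_def using vp unfolding valid_priors_def
    by (auto intro!: prob_space_imp_sigma_finite prob_space_return)
  have "prior K P = PiM (insert a ({..<K} - {a})) P'"
    unfolding prior_def P'_def using a by (intro PiM_cong) auto
  moreover have "PiM ({..<K} - {a}) P = PiM ({..<K} - {a}) P'"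
    unfolding P'_def by (intro PiM_cong) auto
  moreover have "P' a = P a" unfolding P'_def using a by simp
  ultimately show ?thesis
    using product_integral_insert[of "{..<K} - {a}" a f] f by simp
qed

lemma measurable_prior_update:
  assumes a: "a < K" and y: "y \<in> space (PiM ({..<K} - {a}) P)"
    and F: "F \<in> borel_measurable (prior K P)"
  shows "(\<lambda>x. F (y(a := x))) \<in> borel_measurable (P a)"
proof -
  have "insert a ({..<K} - {a}) = {..<K}" using a by auto
  then have "(\<lambda>x. y(a := x)) \<in> measurable (P a) (prior K P)"
    using measurable_component_update[OF y, of a] unfolding prior_def by simp
  then show ?thesis using F by (rule measurable_compose)
qed

definition lik_arm :: "nat \<Rightarrow> history \<Rightarrow> real \<Rightarrow> real" where
  "lik_arm a h x = (\<Prod>r\<in>{r. r < length h \<and> fst (h ! r) = a}. if snd (h ! r) then x else 1 - x)"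

definition lik_other :: "nat \<Rightarrow> history \<Rightarrow> (nat \<Rightarrow> real) \<Rightarrow> real" where
  "lik_other a h mu = (\<Prod>r\<in>{r. r < length h \<and> fst (h ! r) \<noteq> a}.
     if snd (h ! r) then mu (fst (h ! r)) else 1 - mu (fst (h ! r)))"

lemma lik_update_eq: "lik (mu(a := x)) h = lik_arm a h x * lik_other a h mu"
proof -
  let ?c = "\<lambda>r v. if snd (h ! r) then v else 1 - v"
  let ?A = "{r. r < length h \<and> fst (h ! r) = a}" and ?B = "{r. r < length h \<and> fst (h ! r) \<noteq> a}"
  have "{..<length h} = ?A \<union> ?B" by auto
  then have "lik (mu(a := x)) h =
      (\<Prod>r\<in>?A. ?c r ((mu(a := x)) (fst (h ! r)))) * (\<Prod>r\<in>?B. ?c r ((mu(a := x)) (fst (h ! r))))"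
    unfolding lik_def by (simp add: prod.union_disjoint[symmetric] disjoint_iff)
  also have "\<dots> = lik_arm a h x * lik_other a h mu"
    unfolding lik_arm_def lik_other_def by (intro arg_cong2[where f = "(*)"] prod.cong) auto
  finally show ?thesis .
qed

lemma lik_arm_bounds: "x \<in> {0..1} \<Longrightarrow> 0 \<le> lik_arm a h x \<and> lik_arm a h x \<le> 1"
  unfolding lik_arm_def by (auto intro!: prod_nonneg prod_le_1)

lemma lik_other_nonneg:
  assumes "h \<in> histories K n" "\<forall>k\<in>{..<K} - {a}. y k \<in> {0..1}"
  shows "0 \<le> lik_other a h y"
proof -
  have "fst (h ! r) < K" if "r < length h" for r
    using assms(1) that unfolding histories_def by (force dest: nth_mem)
  then have "y (fst (h ! r)) \<in> {0..1}" if "r < length h" "fst (h ! r) \<noteq> a" for r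
    using assms(2) that by blast
  then show ?thesis unfolding lik_other_def by (auto intro!: prod_nonneg)
qed

lemma measurable_lik_arm: "sets M = sets borel \<Longrightarrow> (\<lambda>x. lik_arm a h x) \<in> borel_measurable M"
  unfolding lik_arm_def by (drule measurable_ident_sets) (intro borel_measurable_prod; auto)

lemma post_int_one_snoc_factor:
  assumes vp: "valid_priors K P" and a: "a < K" and h: "h \<in> histories K n"
  shows "post_int K P (\<lambda>_. 1) (h @ [(a, r)]) =
    (\<integral>y. lik_other a h y \<partial>PiM ({..<K} - {a}) P) *
    (\<integral>x. lik_arm a h x * (if r then x else 1 - x) \<partial>P a)"
proof -
  have "integrable (prior K P) (\<lambda>mu. 1 * lik mu (h @ [(a, r)]))"
    using histories_snoc[OF h a] by (rule integrable_times_lik[OF vp, of _ _ _ 1]) auto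
  then have "post_int K P (\<lambda>_. 1) (h @ [(a, r)]) =
      (\<integral>y. (\<integral>x. 1 * lik (y(a := x)) (h @ [(a, r)]) \<partial>P a) \<partial>PiM ({..<K} - {a}) P)"
    unfolding post_int_def by (rule integral_prior_split[OF vp a])
  also have "\<dots> = (\<integral>y. lik_other a h y *
      (\<integral>x. lik_arm a h x * (if r then x else 1 - x) \<partial>P a) \<partial>PiM ({..<K} - {a}) P)"
  proof (rule Bochner_Integration.integral_cong[OF refl])
    fix y :: "nat \<Rightarrow> real"
    have "(\<integral>x. 1 * lik (y(a := x)) (h @ [(a, r)]) \<partial>P a) =
        (\<integral>x. lik_other a h y * (lik_arm a h x * (if r then x else 1 - x)) \<partial>P a)"
      by (rule Bochner_Integration.integral_cong) (cases r; simp add: lik_snoc lik_update_eq)+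
    then show "(\<integral>x. 1 * lik (y(a := x)) (h @ [(a, r)]) \<partial>P a) =
        lik_other a h y * (\<integral>x. lik_arm a h x * (if r then x else 1 - x) \<partial>P a)"
      by simp
  qed
  finally show ?thesis by simp
qed

section \<open>One more observation\<close>

text \<open>Up to the factor \<open>L(h\<cdot>(a,1)) L(h\<cdot>(a,0))\<close>, with \<open>L = post_int K P (\<lambda>_. 1)\<close>, this is the
  posterior mean of \<open>F\<close> after a success on arm \<open>a\<close> minus its posterior mean after a failure.\<close>
definition reward_gap ::
  "nat \<Rightarrow> (nat \<Rightarrow> real measure) \<Rightarrow> ((nat \<Rightarrow> real) \<Rightarrow> real) \<Rightarrow> history \<Rightarrow> nat \<Rightarrow> real" where
  "reward_gap K P F h a =
     post_int K P F (h @ [(a, True)]) * post_int K P (\<lambda>_. 1) (h @ [(a, False)])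
   - post_int K P F (h @ [(a, False)]) * post_int K P (\<lambda>_. 1) (h @ [(a, True)])"

lemma reward_gap_section_nonneg:
  fixes F :: "(nat \<Rightarrow> real) \<Rightarrow> real"
  assumes vp: "valid_priors K P" and a: "a < K" and h: "h \<in> histories K n"
    and y: "y \<in> space (PiM ({..<K} - {a}) P)" "\<forall>k\<in>{..<K} - {a}. y k \<in> {0..1}"
    and Fm: "F \<in> borel_measurable (prior K P)"
    and Fb: "\<And>mu. \<forall>k<K. mu k \<in> {0..1} \<Longrightarrow> \<bar>F mu\<bar> \<le> 1"
    and Fmono: "\<And>mu x x'. 0 \<le> x \<Longrightarrow> x \<le> x' \<Longrightarrow> x' \<le> 1 \<Longrightarrow> F (mu(a := x)) \<le> F (mu(a := x'))"
    and "0 \<le> c"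
  defines "m1 \<equiv> (\<integral>x. lik_arm a h x * x \<partial>P a)" and "m0 \<equiv> (\<integral>x. lik_arm a h x * (1 - x) \<partial>P a)"
  shows "0 \<le> (\<integral>x. F (y(a := x)) * lik (y(a := x)) (h @ [(a, True)]) * (c * m0)
                   - F (y(a := x)) * lik (y(a := x)) (h @ [(a, False)]) * (c * m1) \<partial>P a)"
proof -
  interpret Pa: prob_space "P a" using vp a unfolding valid_priors_def by auto
  have Pa_sets: "sets (P a) = sets borel" using vp a unfolding valid_priors_def by auto
  have Pa_unit: "AE x in P a. x \<in> {0..1}"
    using vp a unfolding valid_priors_def by (intro Pa.AE_prob_1) auto
  define psi where "psi = (\<lambda>x. F (y(a := x)))"
  have psi_m: "psi \<in> borel_measurable (P a)"
    unfolding psi_def using a y(1) Fm by (rule measurable_prior_update)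
  have psi_b: "\<bar>psi x\<bar> \<le> 1" if "x \<in> {0..1}" for x
    unfolding psi_def using y(2) that by (intro Fb) auto
  have psi_mono: "psi x \<le> psi x'" if "0 \<le> x" "x \<le> x'" "x' \<le> 1" for x x'
    unfolding psi_def using that by (rule Fmono)
  have bern_m: "(\<lambda>x. psi x * lik_arm a h x * x) \<in> borel_measurable (P a)"
      "(\<lambda>x. psi x * lik_arm a h x * (1 - x)) \<in> borel_measurable (P a)"
    using psi_m measurable_lik_arm[OF Pa_sets] measurable_ident_sets[OF Pa_sets]
    by (auto intro!: borel_measurable_times borel_measurable_diff)
  have "\<bar>psi x * lik_arm a h x * x\<bar> \<le> 1" "\<bar>psi x * lik_arm a h x * (1 - x)\<bar> \<le> 1"
    if "x \<in> {0..1}" for x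
    using psi_b[OF that] lik_arm_bounds[OF that, of a h] that
    by (auto simp: abs_mult intro!: mult_le_one)
  then have int: "integrable (P a) (\<lambda>x. psi x * lik_arm a h x * x)"
      "integrable (P a) (\<lambda>x. psi x * lik_arm a h x * (1 - x))"
    using bern_m
    by (auto intro!: integrable_bounded_on_unit_interval[OF Pa.finite_measure_axioms Pa_unit, where C = 1])
  have "(\<integral>x. F (y(a := x)) * lik (y(a := x)) (h @ [(a, True)]) * (c * m0)
               - F (y(a := x)) * lik (y(a := x)) (h @ [(a, False)]) * (c * m1) \<partial>P a)
      = (\<integral>x. lik_other a h y * c * (m0 * (psi x * lik_arm a h x * x)
                                   - m1 * (psi x * lik_arm a h x * (1 - x))) \<partial>P a)"
    unfolding psi_def lik_snoc lik_update_eq by (rule Bochner_Integration.integral_cong) (simp_all add: algebra_simps)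
  also have "\<dots> = lik_other a h y * c * (m0 * (\<integral>x. psi x * lik_arm a h x * x \<partial>P a)
                                        - m1 * (\<integral>x. psi x * lik_arm a h x * (1 - x) \<partial>P a))"
    using int by simp
  also have "0 \<le> \<dots>"
  proof (intro mult_nonneg_nonneg)
    show "0 \<le> lik_other a h y" using lik_other_nonneg[OF h y(2)] .
    show "0 \<le> c" by fact
    show "0 \<le> m0 * (\<integral>x. psi x * lik_arm a h x * x \<partial>P a) - m1 * (\<integral>x. psi x * lik_arm a h x * (1 - x) \<partial>P a)"
      using chebyshev_tilt_inequality[OF Pa.finite_measure_axioms Pa_sets Pa_unit
          measurable_lik_arm[OF Pa_sets] lik_arm_bounds psi_m psi_b psi_mono]
      unfolding m0_def m1_def by (simp add: mult.commute)
  qed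
  finally show ?thesis .
qed

lemma reward_gap_nonneg:
  fixes F :: "(nat \<Rightarrow> real) \<Rightarrow> real"
  assumes vp: "valid_priors K P" and a: "a < K" and h: "h \<in> histories K n"
    and Fm: "F \<in> borel_measurable (prior K P)"
    and Fb: "\<And>mu. \<forall>k<K. mu k \<in> {0..1} \<Longrightarrow> \<bar>F mu\<bar> \<le> 1"
    and Fmono: "\<And>mu x x'. 0 \<le> x \<Longrightarrow> x \<le> x' \<Longrightarrow> x' \<le> 1 \<Longrightarrow> F (mu(a := x)) \<le> F (mu(a := x'))"
  shows "0 \<le> reward_gap K P F h a"
proof -
  let ?I = "{..<K} - {a}"
  define c where "c = (\<integral>y. lik_other a h y \<partial>PiM ?I P)"
  define m1 where "m1 = (\<integral>x. lik_arm a h x * x \<partial>P a)"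
  define m0 where "m0 = (\<integral>x. lik_arm a h x * (1 - x) \<partial>P a)"
  have unit: "AE y in PiM ?I P. \<forall>k\<in>?I. y k \<in> {0..1}"
    by (rule AE_PiM_unit_interval[OF vp]) auto
  have "0 \<le> c" unfolding c_def
    by (rule integral_nonneg_AE) (use unit lik_other_nonneg[OF h] in \<open>auto elim: eventually_mono\<close>)
  have int: "integrable (prior K P) (\<lambda>mu. F mu * lik mu (h @ [(a, r)]))" for r
    using histories_snoc[OF h a] Fm Fb by (rule integrable_times_lik[OF vp])
  let ?g = "\<lambda>mu. F mu * lik mu (h @ [(a, True)]) * (c * m0) - F mu * lik mu (h @ [(a, False)]) * (c * m1)"
  have "reward_gap K P F h a = (\<integral>mu. ?g mu \<partial>prior K P)"
    using post_int_one_snoc_factor[OF vp a h] int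
    unfolding reward_gap_def c_def m0_def m1_def post_int_def by simp
  also have "\<dots> = (\<integral>y. (\<integral>x. ?g (y(a := x)) \<partial>P a) \<partial>PiM ?I P)"
    using int by (intro integral_prior_split[OF vp a]) auto
  also have "0 \<le> \<dots>"
  proof (rule integral_nonneg_AE)
    show "AE y in PiM ?I P. 0 \<le> (\<integral>x. ?g (y(a := x)) \<partial>P a)"
      using unit AE_space
    proof eventually_elim
      case (elim y)
      show ?case
        using reward_gap_section_nonneg[OF vp a h elim(2) elim(1) Fm Fb Fmono \<open>0 \<le> c\<close>]
        unfolding m0_def m1_def .
    qed
  qed
  finally show ?thesis .
qed

lemma reward_gap_nonpos:
  fixes F :: "(nat \<Rightarrow> real) \<Rightarrow> real"
  assumes vp: "valid_priors K P" and a: "a < K" and h: "h \<in> histories K n"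
    and Fm: "F \<in> borel_measurable (prior K P)"
    and Fb: "\<And>mu. \<forall>k<K. mu k \<in> {0..1} \<Longrightarrow> \<bar>F mu\<bar> \<le> 1"
    and Fmono: "\<And>mu x x'. 0 \<le> x \<Longrightarrow> x \<le> x' \<Longrightarrow> x' \<le> 1 \<Longrightarrow> F (mu(a := x')) \<le> F (mu(a := x))"
  shows "reward_gap K P F h a \<le> 0"
proof -
  have "0 \<le> reward_gap K P (\<lambda>mu. - F mu) h a"
    using Fm Fb Fmono by (intro reward_gap_nonneg[OF vp a h]) auto
  moreover have "reward_gap K P (\<lambda>mu. - F mu) h a = - reward_gap K P F h a"
    unfolding reward_gap_def post_int_def by simp
  ultimately show ?thesis by simp
qed

lemma measurable_arm_gap:
  "valid_priors K P \<Longrightarrow> i < K \<Longrightarrow> j < K \<Longrightarrow> (\<lambda>mu. mu i - mu j) \<in> borel_measurable (prior K P)"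
  by (intro borel_measurable_diff measurable_prior_component)

lemma abs_arm_gap_le_1:
  fixes mu :: "nat \<Rightarrow> real"
  assumes "\<forall>k<K. mu k \<in> {0..1}" "i < K" "j < K"
  shows "\<bar>mu i - mu j\<bar> \<le> 1"
  using assms(1)[rule_format, OF assms(2)] assms(1)[rule_format, OF assms(3)] by (auto simp: abs_le_iff)

lemma reward_gap_same_sign:
  assumes vp: "valid_priors K P" and a: "a < K" and h: "h \<in> histories K n"
    and i: "i < K" and j: "j < K"
  shows "0 \<le> reward_gap K P (\<lambda>mu. mu i - mu j) h a *
             reward_gap K P (\<lambda>mu. indicator {mu. best_arm K mu = i} mu) h a"
proof -
  let ?D = "\<lambda>mu :: nat \<Rightarrow> real. mu i - mu j"
  let ?I = "\<lambda>mu. indicator {mu. best_arm K mu = i} mu :: real"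
  note Dm = measurable_arm_gap[OF vp i j] and Db = abs_arm_gap_le_1[OF _ i j]
  note Im = measurable_best_arm_indicator[OF vp i]
  have Ib: "\<bar>?I mu\<bar> \<le> 1" for mu
    by (simp add: indicator_def)
  note nonneg = reward_gap_nonneg[OF vp a h] and nonpos = reward_gap_nonpos[OF vp a h]
  consider "a = i" "i \<noteq> j" | "a = j" "i \<noteq> j" | "i = j \<or> (a \<noteq> i \<and> a \<noteq> j)"
    by blast
  then show ?thesis
  proof cases
    case 1
    have "0 \<le> reward_gap K P ?D h a"
      by (rule nonneg[OF Dm Db]) (use 1 in auto)
    moreover have "0 \<le> reward_gap K P ?I h a"
      by (rule nonneg[OF Im Ib]) (use 1 best_arm_update_increase[OF i] in \<open>auto simp: indicator_def\<close>)
    ultimately show ?thesis by simp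
  next
    case 2
    have "reward_gap K P ?D h a \<le> 0"
      by (rule nonpos[OF Dm Db]) (use 2 in auto)
    moreover have "reward_gap K P ?I h a \<le> 0"
      by (rule nonpos[OF Im Ib]) (use 2 best_arm_update_decrease[OF i] in \<open>auto simp: indicator_def\<close>)
    ultimately show ?thesis by (simp add: mult_nonpos_nonpos)
  next
    case 3
    have "0 \<le> reward_gap K P ?D h a"
      by (rule nonneg[OF Dm Db]) (use 3 in auto)
    moreover have "reward_gap K P ?D h a \<le> 0"
      by (rule nonpos[OF Dm Db]) (use 3 in auto)
    ultimately show ?thesis by simp
  qed
qed

lemma merged_ratio_mul_le:
  fixes L0 L1 I0 I1 D0 D1 :: real
  assumes "0 \<le> I0" "I0 \<le> L0" "0 \<le> I1" "I1 \<le> L1" "\<bar>D0\<bar> \<le> L0" "\<bar>D1\<bar> \<le> L1"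
    and same_sign: "0 \<le> (D1 * L0 - D0 * L1) * (I1 * L0 - I0 * L1)"
  shows "(I0 + I1) / (L0 + L1) * (D0 + D1) \<le> I1 / L1 * D1 + I0 / L0 * D0"
proof -
  consider "L0 = 0" | "L1 = 0" | "0 < L0" "0 < L1"
    using assms by fastforce
  then show ?thesis
  proof cases
    case 1
    then have "I0 = 0" "D0 = 0" using assms by auto
    then show ?thesis using 1 by simp
  next
    case 2
    then have "I1 = 0" "D1 = 0" using assms by auto
    then show ?thesis using 2 by simp
  next
    case 3
    have "I1 / L1 * D1 + I0 / L0 * D0 - (I0 + I1) / (L0 + L1) * (D0 + D1) =
          (D1 * L0 - D0 * L1) * (I1 * L0 - I0 * L1) / (L0 * L1 * (L0 + L1))"
      using 3 by (simp add: field_simps)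
    also have "\<dots> \<ge> 0" using same_sign 3 by simp
    finally show ?thesis by simp
  qed
qed

lemma ts_prob_post_int_le_snoc:
  assumes vp: "valid_priors K P" and h: "h \<in> histories K n" and a: "a < K"
    and i: "i < K" and j: "j < K"
  shows "ts_prob K P h i * post_int K P (\<lambda>mu. mu i - mu j) h \<le>
         ts_prob K P (h @ [(a, True)]) i * post_int K P (\<lambda>mu. mu i - mu j) (h @ [(a, True)]) +
         ts_prob K P (h @ [(a, False)]) i * post_int K P (\<lambda>mu. mu i - mu j) (h @ [(a, False)])"
proof -
  let ?D = "\<lambda>mu :: nat \<Rightarrow> real. mu i - mu j"
  let ?I = "\<lambda>mu. indicator {mu. best_arm K mu = i} mu :: real"
  note Dm = measurable_arm_gap[OF vp i j] and Db = abs_arm_gap_le_1[OF _ i j]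
  note Im = measurable_best_arm_indicator[OF vp i]
  have Ib: "\<bar>?I mu\<bar> \<le> 1" for mu
    by (simp add: indicator_def)
  note hr = histories_snoc[OF h a]
  define L where "L r = post_int K P (\<lambda>_. 1) (h @ [(a, r)])" for r
  define I where "I r = post_int K P ?I (h @ [(a, r)])" for r
  define D where "D r = post_int K P ?D (h @ [(a, r)])" for r
  have "0 \<le> I r" for r
    unfolding I_def by (rule post_int_nonneg[OF vp hr]) simp
  moreover have "I r \<le> L r" for r
    unfolding I_def L_def using post_int_abs_le[OF vp hr Im Ib] by (rule abs_le_D1)
  moreover have "\<bar>D r\<bar> \<le> L r" for r
    unfolding D_def L_def by (rule post_int_abs_le[OF vp hr Dm Db])
  ultimately have "(I False + I True) / (L False + L True) * (D False + D True)
      \<le> I True / L True * D True + I False / L False * D False"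
    using reward_gap_same_sign[OF vp a h i j] unfolding reward_gap_def L_def I_def D_def
    by (intro merged_ratio_mul_le) auto
  moreover have "post_int K P G (h @ [(a, False)]) + post_int K P G (h @ [(a, True)]) = post_int K P G h"
    if "G \<in> borel_measurable (prior K P)" "\<And>mu. \<forall>k<K. mu k \<in> {0..1} \<Longrightarrow> \<bar>G mu\<bar> \<le> 1" for G
    using post_int_snoc[OF vp h a that] by simp
  ultimately show ?thesis
    using Im Ib Dm Db unfolding ts_prob_eq_post_int L_def I_def D_def by simp
qed

lemma ts_after_joint_one_Suc:
  assumes vp: "valid_priors K P" and va: "valid_alg K ALG" and i: "i < K"
  shows "ts_after_joint K P ALG (Suc n) (\<lambda>_. 1) i = ts_after_joint K P ALG n (\<lambda>_. 1) i"
proof -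
  let ?I = "post_int K P (\<lambda>mu. indicator {mu. best_arm K mu = i} mu)"
  have eq: "ts_after_joint K P ALG m (\<lambda>_. 1) i = (\<Sum>h\<in>histories K m. alg_prob ALG h * ?I h)" for m
    unfolding ts_after_joint_eq_sum
    by (intro sum.cong refl) (simp add: ts_prob_times_post_int_one[OF vp _ i])
  have "?I (h @ [(a, True)]) + ?I (h @ [(a, False)]) - ?I h = 0" if "h \<in> histories K n" "a < K" for h a
    using post_int_snoc[OF vp that measurable_best_arm_indicator[OF vp i]] by (simp add: indicator_def)
  then have "ts_after_joint K P ALG (Suc n) (\<lambda>_. 1) i - ts_after_joint K P ALG n (\<lambda>_. 1) i = 0"
    unfolding eq sum_alg_prob_Suc_diff[OF va] by simp
  then show ?thesis by simp
qed

lemma ts_after_joint_gap_mono: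
  assumes vp: "valid_priors K P" and va: "valid_alg K ALG" and i: "i < K" and j: "j < K"
  shows "ts_after_joint K P ALG n (\<lambda>mu. mu i - mu j) i \<le>
         ts_after_joint K P ALG (Suc n) (\<lambda>mu. mu i - mu j) i"
proof -
  have "0 \<le> ts_after_joint K P ALG (Suc n) (\<lambda>mu. mu i - mu j) i
             - ts_after_joint K P ALG n (\<lambda>mu. mu i - mu j) i"
    unfolding ts_after_joint_eq_sum sum_alg_prob_Suc_diff[OF va]
    using ts_prob_post_int_le_snoc[OF vp _ _ i j]
    by (intro sum_nonneg mult_nonneg_nonneg) (auto simp: alg_prob_nonneg)
  then show ?thesis by simp
qed

theorem lemma3p7:
  fixes K t :: nat and P :: "nat \<Rightarrow> real measure" and ALG :: algorithm
  assumes "valid_priors K P"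
    and "valid_alg K ALG"
    and "1 \<le> t"
    and "bic_ts_after K P ALG (t - 1)"
  shows "bic_ts_after K P ALG t"
proof -
  obtain n where t: "t = Suc n" using assms(3) by (cases t) auto
  show ?thesis unfolding bic_ts_after_def t
  proof (intro allI impI)
    fix i j assume i: "i < K" and j: "j < K"
      and pos: "0 < ts_after_joint K P ALG (Suc n) (\<lambda>_. 1) i"
    then have "0 < ts_after_joint K P ALG n (\<lambda>_. 1) i"
      using ts_after_joint_one_Suc[OF assms(1,2) i] by simp
    then have "0 \<le> ts_after_joint K P ALG n (\<lambda>mu. mu i - mu j) i"
      using assms(4) i j unfolding bic_ts_after_def t by (auto simp: zero_le_divide_iff)
    then have "0 \<le> ts_after_joint K P ALG (Suc n) (\<lambda>mu. mu i - mu j) i"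
      using ts_after_joint_gap_mono[OF assms(1,2) i j, of n] by linarith
    then show "0 \<le> ts_after_joint K P ALG (Suc n) (\<lambda>mu. mu i - mu j) i /
                   ts_after_joint K P ALG (Suc n) (\<lambda>_. 1) i"
      using pos by simp
  qed
qed

end
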